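(* Let $w\in\mathcal{M}_{n_x,n_y}$. The words $v$ occurring with nonzero coefficient in $Hw$ are precisely the words $v\in\mathcal{M}_{n_x,n_y}$ such that: (i) if $i\in E^x_v$ then $f^x_v(i)=f^x_w(i)-1$; (ii) if $i\notin E^x_v$ then $f^x_v(i)\ge f^x_w(i)$. The coefficient of such $v$ in $Hw$ is $(-1)^{|E^x_v|}$.
   Context: $\mathcal{M}_{n_x,n_y}$ is the set of words in letters $x,y$ with $n_x$ $x$'s and $n_y$ $y$'s; $\mathcal{F}_{n_x,n_y}$ its $\mathbb{Z}$-span. Number the $x$'s of a word $1,\dots,n_x$ from left to right. $f^x_w(i)$ is the number of $y$'s strictly to the left of the $i$-th $x$ in $w$. $E^x_v\subseteq\{1,\dots,n_x\}$ is the set of $i$ such that the $i$-th $x$ of $v$ is immediately followed by a $y$. Partial order: $w_0\le w_1$ iff $f^x_{w_0}(i)\le f^x_{w_1}(i)$ for all $i$. $\langle w_0|w_1\rangle=1$ if $w_0\le w_1$, else $0$. $H$ is the linear map on $\mathcal{F}_{n_x,n_y}$ with $\langle u|v\rangle=\langle v|Hu\rangle$ for all $u,v$. *)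

theory Defs
  imports Main
begin

datatype letter = X | Y

type_synonym word = "letter list"

definition M :: "nat \<Rightarrow> nat \<Rightarrow> word set" where
  "M nx ny = {w. count_list w X = nx \<and> count_list w Y = ny}"

fun fxs_aux :: "nat \<Rightarrow> word \<Rightarrow> nat list" where
  "fxs_aux k [] = []"
| "fxs_aux k (X # w) = k # fxs_aux k w"
| "fxs_aux k (Y # w) = fxs_aux (Suc k) w"

text \<open>f^x_w(i), for the i-th x of w, i = 1..n_x: number of y's strictly left of it.\<close>
definition fx :: "word \<Rightarrow> nat \<Rightarrow> nat" where
  "fx w i = fxs_aux 0 w ! (i - 1)"

fun followedY :: "word \<Rightarrow> bool list" where
  "followedY [] = []"
| "followedY (X # w) = (case w of Y # _ \<Rightarrow> True | _ \<Rightarrow> False) # followedY w"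
| "followedY (Y # w) = followedY w"

definition Ex :: "nat \<Rightarrow> word \<Rightarrow> nat set" where
  "Ex nx v = {i \<in> {1..nx}. followedY v ! (i - 1)}"

definition wle :: "nat \<Rightarrow> word \<Rightarrow> word \<Rightarrow> bool" where
  "wle nx w0 w1 \<longleftrightarrow> (\<forall>i \<in> {1..nx}. fx w0 i \<le> fx w1 i)"

definition pair :: "nat \<Rightarrow> word \<Rightarrow> word \<Rightarrow> int" where
  "pair nx w0 w1 = (if wle nx w0 w1 then 1 else 0)"

text \<open>H u, as its coefficient function on basis words (an element of the Z-span of M_{nx,ny}),
  characterised by <u|v> = <v|H u> for all basis words v (bilinearly extended pairing).\<close>
definition H :: "nat \<Rightarrow> nat \<Rightarrow> word \<Rightarrow> (word \<Rightarrow> int)" where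
  "H nx ny u = (THE c. (\<forall>v. v \<notin> M nx ny \<longrightarrow> c v = 0) \<and>
     (\<forall>v \<in> M nx ny. (\<Sum>w \<in> M nx ny. pair nx v w * c w) = pair nx u v))"

end

theory Submission
  imports Defs
begin

text \<open>A word is determined by its profile \<open>fx\<close>, a monotone sequence bounded by \<open>ny\<close>, and
  \<open>pair\<close> is the zeta matrix of the componentwise order on profiles. Hence the coefficients of
  \<open>H u\<close> are \<open>z \<mapsto> \<Sum>\<^sub>y \<mu>(z, y) \<langle>u|y\<rangle>\<close> with \<open>\<mu>\<close> the Moebius function. In this lattice
  \<open>\<mu>(z, y) = (-1)^|S|\<close> if \<open>y\<close> arises from \<open>z\<close> by raising the profile by one at a set
  \<open>S \<subseteq> E\<^sup>x\<^sub>z\<close> of positions, and \<open>0\<close> otherwise; this is checked directly by inclusion-exclusion,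
  and uniqueness of \<open>H u\<close> follows because \<open>\<mu>\<close> is unitriangular with respect to \<open>\<Sum>\<^sub>i fx z i\<close>.
  For fixed \<open>u\<close>, the alternating sum of \<open>\<langle>u|y\<rangle>\<close> over \<open>S\<close> factorises over the positions in
  \<open>E\<^sup>x\<^sub>z\<close>, which yields the stated conditions and sign.\<close>

lemma length_eq_count_X_plus_count_Y: "length w = count_list w X + count_list w Y"
proof (induction w)
  case (Cons a w) then show ?case by (cases a) auto
qed simp

lemma finite_M: "finite (M nx ny)"
proof -
  have "M nx ny \<subseteq> {w. set w \<subseteq> UNIV \<and> length w = nx + ny}"
    unfolding M_def using length_eq_count_X_plus_count_Y by auto
  moreover have "finite (UNIV :: letter set)"
  proof -
    have "(UNIV :: letter set) = {X, Y}" using letter.exhaust by auto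
    then show ?thesis by (metis finite.emptyI finite.insertI)
  qed
  ultimately show ?thesis using finite_subset finite_lists_length_eq by blast
qed

lemma length_fxs_aux: "length (fxs_aux k w) = count_list w X"
  by (induction k w rule: fxs_aux.induct) auto

lemma sorted_fxs_aux:
  "sorted (fxs_aux k w) \<and> (\<forall>x\<in>set (fxs_aux k w). k \<le> x \<and> x \<le> k + count_list w Y)"
  by (induction k w rule: fxs_aux.induct) fastforce+

lemma starts_with_Y_iff:
  "(case w of Y # _ \<Rightarrow> True | _ \<Rightarrow> False) \<longleftrightarrow>
   (if 0 < count_list w X then k < fxs_aux k w ! 0 else 0 < count_list w Y)"
proof (cases w)
  case (Cons a t)
  show ?thesis
  proof (cases a)
    case Y
    show ?thesis
    proof (cases "0 < count_list t X")
      case True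
      then have "fxs_aux (Suc k) t ! 0 \<in> set (fxs_aux (Suc k) t)"
        using length_fxs_aux[of "Suc k" t] by (intro nth_mem) simp
      then show ?thesis using Cons Y True sorted_fxs_aux[of "Suc k" t] by fastforce
    qed (use Cons Y in auto)
  qed (use Cons in simp)
qed simp

lemma followedY_nth:
  "j < count_list w X \<Longrightarrow> followedY w ! j \<longleftrightarrow>
    (if Suc j < count_list w X then fxs_aux k w ! j < fxs_aux k w ! Suc j
     else fxs_aux k w ! j < k + count_list w Y)"
proof (induction k w arbitrary: j rule: fxs_aux.induct)
  case (2 k w)
  then show ?case using starts_with_Y_iff[of w k] by (cases j) auto
qed simp_all

lemma fxs_aux_inj:
  "fxs_aux k w1 = fxs_aux k w2 \<Longrightarrow> count_list w1 Y = count_list w2 Y \<Longrightarrow> w1 = w2"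
proof (induction k w1 arbitrary: w2 rule: fxs_aux.induct)
  case (1 k)
  then have "count_list w2 X = 0" using length_fxs_aux[of k w2] by simp
  then show ?case using 1 length_eq_count_X_plus_count_Y[of w2] by simp
next
  case (2 k w)
  show ?case
  proof (cases w2)
    case (Cons a t)
    show ?thesis
    proof (cases a)
      case Y
      then have "fxs_aux (Suc k) t = k # fxs_aux k w" using 2 Cons by simp
      then have "k \<in> set (fxs_aux (Suc k) t)" by simp
      then show ?thesis using sorted_fxs_aux[of "Suc k" t] by fastforce
    qed (use 2 Cons in simp)
  qed (use 2 in simp)
next
  case (3 k w)
  show ?case
  proof (cases w2)
    case (Cons a t)
    show ?thesis
    proof (cases a)
      case X
      then have "k \<in> set (fxs_aux (Suc k) w)" using 3 Cons by simp
      then show ?thesis using sorted_fxs_aux[of "Suc k" w] by fastforce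
    qed (use 3 Cons in simp)
  qed (use 3 in simp)
qed

text \<open>Inverse of \<open>fxs_aux k\<close>, for words with \<open>n\<close> letters y.\<close>
fun word_of_profile :: "nat \<Rightarrow> nat \<Rightarrow> nat list \<Rightarrow> word" where
  "word_of_profile k n [] = replicate n Y"
| "word_of_profile k 0 (a # L) = X # word_of_profile k 0 L"
| "word_of_profile k (Suc n) (a # L) =
     (if a \<le> k then X # word_of_profile k (Suc n) L else Y # word_of_profile (Suc k) n (a # L))"

lemma word_of_profile_correct:
  "sorted L \<Longrightarrow> (\<forall>x\<in>set L. k \<le> x \<and> x \<le> k + n) \<Longrightarrow>
   fxs_aux k (word_of_profile k n L) = L \<and>
   count_list (word_of_profile k n L) X = length L \<and> count_list (word_of_profile k n L) Y = n"
proof (induction k n L rule: word_of_profile.induct)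
  case (1 k n)
  have "fxs_aux k (replicate n Y) = []" by (induction n arbitrary: k) auto
  moreover have "count_list (replicate n Y) X = 0" "count_list (replicate n Y) Y = n"
    by (induction n) auto
  ultimately show ?case by simp
next
  case (3 k n a L)
  show ?case
  proof (cases "a \<le> k")
    case False
    have "\<forall>x\<in>set (a # L). Suc k \<le> x \<and> x \<le> Suc k + n" using "3.prems" False by auto
    then show ?thesis using "3.IH"(2)[OF False "3.prems"(1)] False by simp
  qed (use 3 in auto)
qed auto

lemma fx_le_ny: "w \<in> M nx ny \<Longrightarrow> i \<in> {1..nx} \<Longrightarrow> fx w i \<le> ny"
proof -
  assume w: "w \<in> M nx ny" and i: "i \<in> {1..nx}"
  then have "fx w i \<in> set (fxs_aux 0 w)"
    unfolding fx_def M_def using length_fxs_aux[of 0 w] by (intro nth_mem) auto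
  then show ?thesis using sorted_fxs_aux[of 0 w] w unfolding M_def by auto
qed

lemma fx_mono: "w \<in> M nx ny \<Longrightarrow> 1 \<le> i \<Longrightarrow> i \<le> j \<Longrightarrow> j \<le> nx \<Longrightarrow> fx w i \<le> fx w j"
  unfolding fx_def M_def using sorted_fxs_aux[of 0 w] length_fxs_aux[of 0 w]
  by (auto simp: sorted_iff_nth_mono)

lemma Ex_subset: "Ex nx w \<subseteq> {1..nx}"
  unfolding Ex_def by auto

lemma finite_Ex: "finite (Ex nx w)"
  using Ex_subset finite_subset by blast

lemma Ex_iff:
  assumes "w \<in> M nx ny"
  shows "i \<in> Ex nx w \<longleftrightarrow> i \<in> {1..nx} \<and> fx w i < (if i < nx then fx w (Suc i) else ny)"
proof (cases "i \<in> {1..nx}")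
  case True
  then have "followedY w ! (i - 1) \<longleftrightarrow>
      (if Suc (i - 1) < nx then fxs_aux 0 w ! (i - 1) < fxs_aux 0 w ! Suc (i - 1)
       else fxs_aux 0 w ! (i - 1) < 0 + ny)"
    using followedY_nth[of "i - 1" w 0] assms unfolding M_def by auto
  then show ?thesis using True unfolding Ex_def fx_def by auto
qed (auto simp: Ex_def)

lemma M_eqI:
  assumes w1: "w1 \<in> M nx ny" and w2: "w2 \<in> M nx ny" and eq: "\<forall>i\<in>{1..nx}. fx w1 i = fx w2 i"
  shows "w1 = w2"
proof -
  have "fxs_aux 0 w1 = fxs_aux 0 w2"
  proof (rule nth_equalityI)
    show "length (fxs_aux 0 w1) = length (fxs_aux 0 w2)"
      using w1 w2 length_fxs_aux unfolding M_def by simp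
    fix j assume "j < length (fxs_aux 0 w1)"
    then have "Suc j \<in> {1..nx}" using w1 length_fxs_aux unfolding M_def by simp
    then show "fxs_aux 0 w1 ! j = fxs_aux 0 w2 ! j" using eq unfolding fx_def by fastforce
  qed
  then show ?thesis using fxs_aux_inj w1 w2 unfolding M_def by auto
qed

definition word_of_fx :: "nat \<Rightarrow> nat \<Rightarrow> (nat \<Rightarrow> nat) \<Rightarrow> word" where
  "word_of_fx nx ny f = word_of_profile 0 ny (map f [1..<Suc nx])"

lemma word_of_fx:
  assumes mono: "\<And>i j. 1 \<le> i \<Longrightarrow> i \<le> j \<Longrightarrow> j \<le> nx \<Longrightarrow> f i \<le> f j"
    and bounded: "\<And>i. i \<in> {1..nx} \<Longrightarrow> f i \<le> ny"
  shows "word_of_fx nx ny f \<in> M nx ny" and "\<forall>i\<in>{1..nx}. fx (word_of_fx nx ny f) i = f i"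
proof -
  define L where "L = map f [1..<Suc nx]"
  have "sorted L" unfolding L_def sorted_iff_nth_mono
    by (auto simp del: upt_Suc simp add: nth_upt intro!: mono)
  moreover have "\<forall>x\<in>set L. 0 \<le> x \<and> x \<le> 0 + ny" unfolding L_def using bounded by auto
  ultimately have L: "fxs_aux 0 (word_of_profile 0 ny L) = L"
    "count_list (word_of_profile 0 ny L) X = length L"
    "count_list (word_of_profile 0 ny L) Y = ny"
    using word_of_profile_correct by blast+
  show "word_of_fx nx ny f \<in> M nx ny"
    using L unfolding word_of_fx_def M_def L_def by simp
  show "\<forall>i\<in>{1..nx}. fx (word_of_fx nx ny f) i = f i"
    using L unfolding word_of_fx_def fx_def L_def by (auto simp del: upt_Suc simp add: nth_upt)
qed

text \<open>For \<open>S \<subseteq> Ex nx z\<close>, this moves each x of \<open>z\<close> indexed by \<open>S\<close> past the y following it.\<close>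
definition raise :: "nat \<Rightarrow> nat \<Rightarrow> word \<Rightarrow> nat set \<Rightarrow> word" where
  "raise nx ny z S = word_of_fx nx ny (\<lambda>i. fx z i + of_bool (i \<in> S))"

lemma
  assumes z: "z \<in> M nx ny" and S: "S \<subseteq> Ex nx z"
  shows raise_in_M: "raise nx ny z S \<in> M nx ny"
    and fx_raise: "\<forall>i\<in>{1..nx}. fx (raise nx ny z S) i = fx z i + of_bool (i \<in> S)"
proof -
  let ?f = "\<lambda>i. fx z i + of_bool (i \<in> S)"
  have step: "fx z i < fx z (Suc i)" if "i \<in> S" "i < nx" for i
    using that S Ex_iff[OF z] by auto
  have mono: "?f i \<le> ?f j" if ij: "1 \<le> i" "i \<le> j" "j \<le> nx" for i j
  proof (cases "i \<in> S \<and> i < j")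
    case True
    then have "fx z i < fx z (Suc i)" "fx z (Suc i) \<le> fx z j"
      using step fx_mono[OF z, of "Suc i" j] ij by auto
    then show ?thesis by simp
  qed (use fx_mono[OF z, of i j] ij in auto)
  have bounded: "?f i \<le> ny" if i: "i \<in> {1..nx}" for i
  proof (cases "i \<in> S")
    case True
    then have "fx z i < (if i < nx then fx z (Suc i) else ny)" using S Ex_iff[OF z] by auto
    then show ?thesis using True fx_le_ny[OF z, of "Suc i"] i by (auto split: if_splits)
  qed (use fx_le_ny[OF z i] in simp)
  show "raise nx ny z S \<in> M nx ny"
    and "\<forall>i\<in>{1..nx}. fx (raise nx ny z S) i = ?f i"
    unfolding raise_def using word_of_fx[of nx ?f ny, OF mono bounded] by blast+
qed

lemma prod_of_bool:
  "finite A \<Longrightarrow> (\<Prod>x\<in>A. of_bool (P x)) = (of_bool (\<forall>x\<in>A. P x) :: 'a::comm_semiring_1)"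
  by (cases "\<forall>x\<in>A. P x") (auto intro!: prod.neutral prod_zero)

lemma sum_Pow_signed_of_bool:
  fixes Q :: "'a \<Rightarrow> bool \<Rightarrow> bool"
  assumes "finite E" and "E \<subseteq> I"
  shows "(\<Sum>S\<in>Pow E. (-1) ^ card S * of_bool (\<forall>i\<in>I. Q i (i \<in> S))) =
    (of_bool (\<forall>i\<in>I - E. Q i False) *
     (\<Prod>i\<in>E. of_bool (Q i False) - of_bool (Q i True)) :: 'b::comm_ring_1)"
proof -
  have "(\<Prod>i\<in>E. - of_bool (Q i True) + of_bool (Q i False)) =
    (\<Sum>S\<in>Pow E. (\<Prod>i\<in>S. - of_bool (Q i True)) * (\<Prod>i\<in>E - S. of_bool (Q i False)) :: 'b)"
    by (rule prod_add[OF assms(1)])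
  also have "\<dots> = (\<Sum>S\<in>Pow E. (-1) ^ card S * of_bool (\<forall>i\<in>E. Q i (i \<in> S)))"
  proof (rule sum.cong[OF refl])
    fix S assume "S \<in> Pow E"
    then have "finite S" "finite (E - S)" using assms(1) finite_subset by auto
    moreover have "(\<forall>i\<in>E. Q i (i \<in> S)) \<longleftrightarrow> (\<forall>i\<in>S. Q i True) \<and> (\<forall>i\<in>E - S. Q i False)"
      using \<open>S \<in> Pow E\<close> by (metis (full_types) Diff_iff PowD subsetD)
    ultimately show "(\<Prod>i\<in>S. - of_bool (Q i True)) * (\<Prod>i\<in>E - S. of_bool (Q i False)) =
      ((-1) ^ card S * of_bool (\<forall>i\<in>E. Q i (i \<in> S)) :: 'b)"
      by (simp add: prod_uminus prod_of_bool)
  qed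
  finally have signed_sum_E: "(\<Sum>S\<in>Pow E. (-1) ^ card S * of_bool (\<forall>i\<in>E. Q i (i \<in> S))) =
    (\<Prod>i\<in>E. of_bool (Q i False) - of_bool (Q i True) :: 'b)" by simp
  have "(\<forall>i\<in>I. Q i (i \<in> S)) \<longleftrightarrow> (\<forall>i\<in>I - E. Q i False) \<and> (\<forall>i\<in>E. Q i (i \<in> S))"
    if "S \<in> Pow E" for S
    using that assms(2) by (metis (full_types) Diff_iff PowD subsetD)
  then have "(\<Sum>S\<in>Pow E. (-1) ^ card S * of_bool (\<forall>i\<in>I. Q i (i \<in> S))) =
    of_bool (\<forall>i\<in>I - E. Q i False) * (\<Sum>S\<in>Pow E. (-1) ^ card S * of_bool (\<forall>i\<in>E. Q i (i \<in> S)) :: 'b)"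
    unfolding sum_distrib_left by (intro sum.cong) auto
  with signed_sum_E show ?thesis by simp
qed

lemma pair_eq_of_bool: "pair nx w0 w1 = of_bool (wle nx w0 w1)"
  by (simp add: pair_def)

text \<open>If \<open>z < y\<close>, let \<open>i\<close> be the last index with \<open>fx z i < fx y i\<close>: the next x of \<open>z\<close> (or the
  end of the word) lies at height \<open>\<ge> fx y i > fx z i\<close>, so the \<open>i\<close>-th x of \<open>z\<close> is followed by a y.\<close>
lemma eq_if_wle_and_fx_eq_on_Ex:
  assumes z: "z \<in> M nx ny" and y: "y \<in> M nx ny" and le: "wle nx z y"
    and eq: "\<forall>i\<in>Ex nx z. fx z i = fx y i"
  shows "z = y"
proof (rule ccontr)
  assume "z \<noteq> y"
  define D where "D = {i\<in>{1..nx}. fx z i < fx y i}"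
  have "D \<noteq> {}" using M_eqI[OF z y] \<open>z \<noteq> y\<close> le unfolding D_def wle_def by force
  define i where "i = Max D"
  have "finite D" unfolding D_def by simp
  then have iD: "i \<in> D" and imax: "\<And>j. j \<in> D \<Longrightarrow> j \<le> i"
    using \<open>D \<noteq> {}\<close> unfolding i_def by auto
  have "i \<notin> Ex nx z" using eq iD unfolding D_def by auto
  then have not_followed: "\<not> fx z i < (if i < nx then fx z (Suc i) else ny)"
    using Ex_iff[OF z] iD unfolding D_def by auto
  show False
  proof (cases "i < nx")
    case True
    then have "Suc i \<notin> D" "Suc i \<in> {1..nx}" using imax by fastforce+
    then have "fx z (Suc i) = fx y (Suc i)" using le unfolding D_def wle_def by fastforce
    moreover have "fx y i \<le> fx y (Suc i)" using fx_mono[OF y, of i "Suc i"] True iD unfolding D_def by auto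
    ultimately show False using not_followed True iD unfolding D_def by auto
  qed (use not_followed iD fx_le_ny[OF y, of i] in \<open>auto simp: D_def\<close>)
qed

lemma signed_sum_pair_raise_left:
  assumes z: "z \<in> M nx ny" and y: "y \<in> M nx ny"
  shows "(\<Sum>S\<in>Pow (Ex nx z). (-1) ^ card S * pair nx (raise nx ny z S) y) = of_bool (z = y)"
proof -
  let ?E = "Ex nx z"
  have "pair nx (raise nx ny z S) y = of_bool (\<forall>i\<in>{1..nx}. fx z i + of_bool (i \<in> S) \<le> fx y i)"
    if "S \<in> Pow ?E" for S
    using fx_raise[OF z] that unfolding pair_eq_of_bool wle_def by auto
  then have "(\<Sum>S\<in>Pow ?E. (-1) ^ card S * pair nx (raise nx ny z S) y) =
    (\<Sum>S\<in>Pow ?E. (-1) ^ card S * of_bool (\<forall>i\<in>{1..nx}. fx z i + of_bool (i \<in> S) \<le> fx y i))"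
    by (intro sum.cong) auto
  also have "\<dots> = of_bool (\<forall>i\<in>{1..nx} - ?E. fx z i \<le> fx y i) *
      (\<Prod>i\<in>?E. of_bool (fx z i \<le> fx y i) - of_bool (fx z i + 1 \<le> fx y i))"
    by (subst sum_Pow_signed_of_bool[OF finite_Ex Ex_subset,
          where Q = "\<lambda>i b. fx z i + of_bool b \<le> fx y i"]) simp
  also have "(\<Prod>i\<in>?E. of_bool (fx z i \<le> fx y i) - of_bool (fx z i + 1 \<le> fx y i)) =
      (\<Prod>i\<in>?E. of_bool (fx z i = fx y i) :: int)"
    by (intro prod.cong) auto
  also have "of_bool (\<forall>i\<in>{1..nx} - ?E. fx z i \<le> fx y i) * \<dots> = of_bool (z = y)"
  proof -
    have "(\<forall>i\<in>{1..nx} - ?E. fx z i \<le> fx y i) \<and> (\<forall>i\<in>?E. fx z i = fx y i) \<longleftrightarrow> z = y"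
      using eq_if_wle_and_fx_eq_on_Ex[OF z y] Ex_subset[of nx z] unfolding wle_def by force
    then show ?thesis unfolding prod_of_bool[OF finite_Ex] of_bool_conj[symmetric] by simp
  qed
  finally show ?thesis .
qed

lemma signed_sum_pair_raise_right:
  assumes v: "v \<in> M nx ny"
  shows "(\<Sum>S\<in>Pow (Ex nx v). (-1) ^ card S * pair nx u (raise nx ny v S)) =
    (if (\<forall>i\<in>{1..nx} - Ex nx v. fx u i \<le> fx v i) \<and> (\<forall>i\<in>Ex nx v. fx u i = fx v i + 1)
     then (-1) ^ card (Ex nx v) else 0)"
proof -
  let ?E = "Ex nx v"
  have "pair nx u (raise nx ny v S) = of_bool (\<forall>i\<in>{1..nx}. fx u i \<le> fx v i + of_bool (i \<in> S))"
    if "S \<in> Pow ?E" for S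
    using fx_raise[OF v] that unfolding pair_eq_of_bool wle_def by auto
  then have "(\<Sum>S\<in>Pow ?E. (-1) ^ card S * pair nx u (raise nx ny v S)) =
    (\<Sum>S\<in>Pow ?E. (-1) ^ card S * of_bool (\<forall>i\<in>{1..nx}. fx u i \<le> fx v i + of_bool (i \<in> S)))"
    by (intro sum.cong) auto
  also have "\<dots> = of_bool (\<forall>i\<in>{1..nx} - ?E. fx u i \<le> fx v i) *
      (\<Prod>i\<in>?E. of_bool (fx u i \<le> fx v i) - of_bool (fx u i \<le> fx v i + 1))"
    by (subst sum_Pow_signed_of_bool[OF finite_Ex Ex_subset,
          where Q = "\<lambda>i b. fx u i \<le> fx v i + of_bool b"]) simp
  also have "(\<Prod>i\<in>?E. of_bool (fx u i \<le> fx v i) - of_bool (fx u i \<le> fx v i + 1)) =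
      (\<Prod>i\<in>?E. - of_bool (fx u i = fx v i + 1) :: int)"
    by (intro prod.cong) auto
  finally show ?thesis by (simp add: prod_uminus prod_of_bool[OF finite_Ex])
qed

definition zeta :: "nat \<Rightarrow> nat \<Rightarrow> (word \<Rightarrow> int) \<Rightarrow> word \<Rightarrow> int" where
  "zeta nx ny c v = (\<Sum>w\<in>M nx ny. pair nx v w * c w)"

definition mobius :: "nat \<Rightarrow> nat \<Rightarrow> (word \<Rightarrow> int) \<Rightarrow> word \<Rightarrow> int" where
  "mobius nx ny d z = (\<Sum>S\<in>Pow (Ex nx z). (-1) ^ card S * d (raise nx ny z S))"

lemma mobius_zeta:
  assumes z: "z \<in> M nx ny"
  shows "mobius nx ny (zeta nx ny c) z = c z"
proof -
  have "mobius nx ny (zeta nx ny c) z =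
    (\<Sum>w\<in>M nx ny. c w * (\<Sum>S\<in>Pow (Ex nx z). (-1) ^ card S * pair nx (raise nx ny z S) w))"
    unfolding mobius_def zeta_def sum_distrib_left
    by (subst sum.swap) (simp add: ac_simps)
  also have "\<dots> = (\<Sum>w\<in>M nx ny. c w * of_bool (z = w))"
    using signed_sum_pair_raise_left[OF z] by simp
  also have "\<dots> = c z" using z finite_M by simp
  finally show ?thesis .
qed

lemma mobius_cong:
  "z \<in> M nx ny \<Longrightarrow> (\<And>w. w \<in> M nx ny \<Longrightarrow> d w = d' w) \<Longrightarrow> mobius nx ny d z = mobius nx ny d' z"
  unfolding mobius_def using raise_in_M by (intro sum.cong) auto

lemma mobius_diff: "mobius nx ny (\<lambda>v. d v - d' v) z = mobius nx ny d z - mobius nx ny d' z"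
  unfolding mobius_def by (simp add: right_diff_distrib sum_subtractf)

definition rank :: "nat \<Rightarrow> word \<Rightarrow> nat" where
  "rank nx z = (\<Sum>i\<in>{1..nx}. fx z i)"

lemma rank_le: "z \<in> M nx ny \<Longrightarrow> rank nx z \<le> nx * ny"
  using sum_mono[of "{1..nx}" "fx z" "\<lambda>_. ny"] fx_le_ny unfolding rank_def by auto

lemma rank_less_rank_raise:
  assumes z: "z \<in> M nx ny" and S: "S \<subseteq> Ex nx z" "S \<noteq> {}"
  shows "rank nx z < rank nx (raise nx ny z S)"
proof -
  obtain a where "a \<in> S" using S(2) by auto
  then have "a \<in> {1..nx}" using S(1) Ex_subset[of nx z] by blast
  then show ?thesis
    unfolding rank_def using fx_raise[OF z S(1)] \<open>a \<in> S\<close>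
    by (intro sum_strict_mono_ex1) auto
qed

lemma raise_empty: "z \<in> M nx ny \<Longrightarrow> raise nx ny z {} = z"
  using raise_in_M[of z nx ny "{}"] fx_raise[of z nx ny "{}"] M_eqI by auto

text \<open>\<open>mobius nx ny d z\<close> is \<open>d z\<close> plus a combination of values of \<open>d\<close> at words of strictly
  larger rank.\<close>
lemma mobius_eq_0_imp_eq_0:
  assumes "\<And>z. z \<in> M nx ny \<Longrightarrow> mobius nx ny d z = 0"
  shows "z \<in> M nx ny \<Longrightarrow> d z = 0"
proof (induction z rule: measure_induct_rule[where f = "\<lambda>z. nx * ny - rank nx z"])
  case (less z)
  have higher: "d (raise nx ny z S) = 0" if "S \<in> Pow (Ex nx z) - {{}}" for S
  proof -
    have "raise nx ny z S \<in> M nx ny" using raise_in_M[OF less.prems] that by auto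
    moreover have "rank nx z < rank nx (raise nx ny z S)"
      using rank_less_rank_raise[OF less.prems] that by auto
    ultimately show ?thesis using less.IH rank_le by (meson diff_less_mono2 order_less_le_trans)
  qed
  have "0 = mobius nx ny d z" using assms less.prems by simp
  also have "\<dots> = d (raise nx ny z {}) +
      (\<Sum>S\<in>Pow (Ex nx z) - {{}}. (-1) ^ card S * d (raise nx ny z S))"
    unfolding mobius_def by (subst sum.remove[where x = "{}"]) (auto simp: finite_Ex)
  also have "\<dots> = d z" using higher raise_empty[OF less.prems] by simp
  finally show ?case by simp
qed

lemma H_eq_mobius_pair:
  assumes u: "u \<in> M nx ny"
  shows "H nx ny u = (\<lambda>w. if w \<in> M nx ny then mobius nx ny (pair nx u) w else 0)"
proof -
  define c0 where "c0 = (\<lambda>w. if w \<in> M nx ny then mobius nx ny (pair nx u) w else 0)"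
  have zeta_c0: "zeta nx ny c0 v = pair nx u v" if v: "v \<in> M nx ny" for v
  proof -
    have "mobius nx ny (\<lambda>v. zeta nx ny c0 v - pair nx u v) z = 0" if "z \<in> M nx ny" for z
      using mobius_zeta[OF that] that unfolding mobius_diff c0_def by simp
    then show ?thesis using mobius_eq_0_imp_eq_0[OF _ v] by fastforce
  qed
  show ?thesis unfolding H_def c0_def[symmetric]
  proof (rule the_equality)
    show "(\<forall>v. v \<notin> M nx ny \<longrightarrow> c0 v = 0) \<and>
        (\<forall>v\<in>M nx ny. (\<Sum>w\<in>M nx ny. pair nx v w * c0 w) = pair nx u v)"
      using zeta_c0 unfolding zeta_def by (auto simp: c0_def)
  next
    fix c assume c: "(\<forall>v. v \<notin> M nx ny \<longrightarrow> c v = 0) \<and>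
        (\<forall>v\<in>M nx ny. (\<Sum>w\<in>M nx ny. pair nx v w * c w) = pair nx u v)"
    show "c = c0"
    proof
      fix z
      show "c z = c0 z"
      proof (cases "z \<in> M nx ny")
        case True
        have "c z = mobius nx ny (zeta nx ny c) z" using mobius_zeta[OF True] by simp
        also have "\<dots> = mobius nx ny (pair nx u) z"
          using c by (intro mobius_cong[OF True]) (simp add: zeta_def)
        finally show ?thesis using True by (simp add: c0_def)
      qed (use c in \<open>simp add: c0_def\<close>)
    qed
  qed
qed

theorem mainTheorem8:
  fixes nx ny :: nat and w v :: word
  assumes "w \<in> M nx ny"
  shows "(H nx ny w v \<noteq> 0 \<longleftrightarrow>
            v \<in> M nx ny \<and>
            (\<forall>i \<in> {1..nx}.
               (i \<in> Ex nx v \<longrightarrow> int (fx v i) = int (fx w i) - 1) \<and>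
               (i \<notin> Ex nx v \<longrightarrow> fx v i \<ge> fx w i)))
       \<and> (v \<in> M nx ny \<and>
            (\<forall>i \<in> {1..nx}.
               (i \<in> Ex nx v \<longrightarrow> int (fx v i) = int (fx w i) - 1) \<and>
               (i \<notin> Ex nx v \<longrightarrow> fx v i \<ge> fx w i))
          \<longrightarrow> H nx ny w v = (-1) ^ card (Ex nx v))"
proof (cases "v \<in> M nx ny")
  case False
  then show ?thesis using H_eq_mobius_pair[OF assms] by simp
next
  case True
  have "(\<forall>i \<in> {1..nx}.
           (i \<in> Ex nx v \<longrightarrow> int (fx v i) = int (fx w i) - 1) \<and>
           (i \<notin> Ex nx v \<longrightarrow> fx v i \<ge> fx w i)) \<longleftrightarrow>
        (\<forall>i\<in>{1..nx} - Ex nx v. fx w i \<le> fx v i) \<and> (\<forall>i\<in>Ex nx v. fx w i = fx v i + 1)"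
    using Ex_subset[of nx v] by auto
  then show ?thesis
    using H_eq_mobius_pair[OF assms] signed_sum_pair_raise_right[OF True, where u = w] True
    by (simp add: mobius_def)
qed

end
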